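(* Let $A$ be a $d\times d$ reclusive matrix and $\vec{c}\in\mathbb{Z}^{d}$. Then $\|A\vec{c}\|_{\infty}\leq 1$ if and only if $\vec{c}=\langle c_{j}\rangle_{j=1}^{d}$ is a weak-alt-1 sequence.
   Context: A $d\times d$ matrix $A=(a_{ij})$ is reclusive if $a_{ij}=0$ for $i>j$, $a_{ii}=1$ for all $i$, and $a_{ij}>a_{ik}>0$ for all $i\le j<k$. A finite sequence $\langle c_i\rangle_{i=1}^n$ is alt-1 if it equals $\langle(-1)^i\rangle_{i=1}^n$ or $\langle(-1)^{i+1}\rangle_{i=1}^n$; it is weak-alt-1 if every term is $-1$, $0$ or $1$ and the subsequence of its nonzero terms is alt-1 (the empty sequence counts as alt-1, so the all-zero sequence is weak-alt-1). *)

theory Defs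
  imports Main "HOL-Analysis.Analysis"
begin

text \<open>A d x d real matrix is represented as a function on indices {1..d} x {1..d}.\<close>
definition reclusive :: "nat \<Rightarrow> (nat \<Rightarrow> nat \<Rightarrow> real) \<Rightarrow> bool" where
  "reclusive d A \<longleftrightarrow>
     (\<forall>i\<in>{1..d}. \<forall>j\<in>{1..d}. i > j \<longrightarrow> A i j = 0) \<and>
     (\<forall>i\<in>{1..d}. A i i = 1) \<and>
     (\<forall>i\<in>{1..d}. \<forall>j\<in>{1..d}. \<forall>k\<in>{1..d}. i \<le> j \<and> j < k \<longrightarrow> A i j > A i k \<and> A i k > 0)"

text \<open>Finite sequences <c_1,...,c_n> as lists; index i (1-based) is position i-1.\<close>
definition alt1 :: "int list \<Rightarrow> bool" where
  "alt1 cs \<longleftrightarrow>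
     cs = map (\<lambda>i. (-1) ^ i) [1..<length cs + 1] \<or>
     cs = map (\<lambda>i. (-1) ^ (i + 1)) [1..<length cs + 1]"

definition weak_alt1 :: "int list \<Rightarrow> bool" where
  "weak_alt1 cs \<longleftrightarrow> set cs \<subseteq> {-1, 0, 1} \<and> alt1 (filter (\<lambda>x. x \<noteq> 0) cs)"

definition matvec_sup_norm :: "nat \<Rightarrow> (nat \<Rightarrow> nat \<Rightarrow> real) \<Rightarrow> (nat \<Rightarrow> int) \<Rightarrow> real" where
  "matvec_sup_norm d A c = Max (insert 0 ((\<lambda>i. \<bar>\<Sum>j=1..d. A i j * of_int (c j)\<bar>) ` {1..d}))"

end

theory Submission
  imports Defs
begin

text \<open>Row i of A c equals c_i + (sum over k > i of a_ik c_k), with weights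
  1 > a_i(i+1) > a_i(i+2) > ... > 0. By the alternating series estimate, a weak-alt-1 tail
  contributes a sum of absolute value below 1 that is 0 or has the sign of the tail's first nonzero
  entry. Hence, once the tail is weak-alt-1, row i has absolute value at most 1 exactly when
  c_i is -1, 0 or 1 and a nonzero c_i has the sign opposite to that entry, i.e. when c_i followed
  by the tail is again weak-alt-1. Induction from the last row upwards gives the theorem.\<close>

lemma alt1_iff_nth: "alt1 xs \<longleftrightarrow> (\<exists>s\<in>{-1, 1::int}. \<forall>k<length xs. xs ! k = s * (-1) ^ k)"
proof -
  have map_eq: "xs = map f [1..<length xs + 1] \<longleftrightarrow> (\<forall>k<length xs. xs ! k = f (Suc k))" for f :: "nat \<Rightarrow> int"
    unfolding list_eq_iff_nth_eq by (simp del: upt_Suc)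
  have "alt1 xs \<longleftrightarrow> (\<forall>k<length xs. xs ! k = (-1) ^ Suc k) \<or> (\<forall>k<length xs. xs ! k = (-1) ^ (Suc k + 1))"
    unfolding alt1_def map_eq by (rule refl)
  also have "\<dots> \<longleftrightarrow> (\<forall>k<length xs. xs ! k = (-1) * (-1) ^ k) \<or> (\<forall>k<length xs. xs ! k = 1 * (-1) ^ k)"
    by simp
  finally show ?thesis
    by blast
qed

lemma alt1_Nil [simp]: "alt1 []"
  by (simp add: alt1_def)

lemma alt1_Cons: "alt1 (x # xs) \<longleftrightarrow> x \<in> {-1, 1} \<and> alt1 xs \<and> (xs \<noteq> [] \<longrightarrow> hd xs = - x)"
proof
  assume "alt1 (x # xs)"
  then obtain s where s: "s \<in> {-1, 1}" and nth: "\<forall>k<length (x # xs). (x # xs) ! k = s * (-1) ^ k"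
    unfolding alt1_iff_nth by blast
  then have "x = s"
    using nth[rule_format, of 0] by simp
  moreover have tl: "\<forall>k<length xs. xs ! k = - s * (-1) ^ k"
    using nth[rule_format, of "Suc k" for k] by simp
  moreover have "alt1 xs"
    unfolding alt1_iff_nth using s tl by (intro bexI[of _ "- s"]) auto
  ultimately show "x \<in> {-1, 1} \<and> alt1 xs \<and> (xs \<noteq> [] \<longrightarrow> hd xs = - x)"
    using s by (simp add: hd_conv_nth)
next
  assume x: "x \<in> {-1, 1} \<and> alt1 xs \<and> (xs \<noteq> [] \<longrightarrow> hd xs = - x)"
  then obtain s where s: "s \<in> {-1, 1}" and nth: "\<forall>k<length xs. xs ! k = s * (-1) ^ k"
    unfolding alt1_iff_nth by blast
  have "xs \<noteq> [] \<Longrightarrow> s = - x"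
    using x nth by (auto simp: hd_conv_nth)
  then have "\<forall>k<length xs. xs ! k = - x * (-1) ^ k"
    using nth by (cases "xs = []") auto
  then have "\<forall>k<length (x # xs). (x # xs) ! k = x * (-1) ^ k"
    by (auto simp: nth_Cons split: nat.split)
  then show "alt1 (x # xs)"
    unfolding alt1_iff_nth using x by blast
qed

definition first_nonzero :: "int list \<Rightarrow> int" where
  "first_nonzero xs = (case filter (\<lambda>x. x \<noteq> 0) xs of [] \<Rightarrow> 0 | y # _ \<Rightarrow> y)"

lemma first_nonzero_Nil [simp]: "first_nonzero [] = 0"
  by (simp add: first_nonzero_def)

lemma first_nonzero_Cons [simp]: "first_nonzero (x # xs) = (if x \<noteq> 0 then x else first_nonzero xs)"
  by (simp add: first_nonzero_def)

lemma first_nonzero_eq_0_iff: "first_nonzero xs = 0 \<longleftrightarrow> filter (\<lambda>x. x \<noteq> 0) xs = []"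
  by (induction xs) auto

lemma hd_filter_nonzero: "filter (\<lambda>x. x \<noteq> 0) xs \<noteq> [] \<Longrightarrow> hd (filter (\<lambda>x. x \<noteq> 0) xs) = first_nonzero xs"
  by (induction xs) auto

lemma weak_alt1_Nil [simp]: "weak_alt1 []"
  by (simp add: weak_alt1_def)

lemma weak_alt1_Cons:
  "weak_alt1 (x # xs) \<longleftrightarrow>
     x \<in> {-1, 0, 1} \<and> weak_alt1 xs \<and> (x \<noteq> 0 \<longrightarrow> first_nonzero xs \<in> {0, - x})"
  using hd_filter_nonzero[of xs] first_nonzero_eq_0_iff[of xs]
  by (cases "x = 0") (auto simp: weak_alt1_def alt1_Cons)

lemma weighted_sum_weak_alt1:
  fixes b :: "nat \<Rightarrow> 'a :: linordered_idom"
  assumes "weak_alt1 xs"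
    and "\<And>j k. j < k \<Longrightarrow> k < length xs \<Longrightarrow> b k < b j"
    and "\<And>j. j < length xs \<Longrightarrow> 0 < b j"
  shows "sgn (\<Sum>k<length xs. b k * of_int (xs ! k)) = of_int (first_nonzero xs)
    \<and> (xs \<noteq> [] \<longrightarrow> \<bar>\<Sum>k<length xs. b k * of_int (xs ! k)\<bar> \<le> b 0)"
  using assms
proof (induction xs arbitrary: b)
  case Nil
  then show ?case by simp
next
  case (Cons x xs)
  define S where "S = (\<Sum>k<length xs. b (Suc k) * of_int (xs ! k))"
  have sum_Cons: "(\<Sum>k<length (x # xs). b k * of_int ((x # xs) ! k)) = b 0 * of_int x + S"
    unfolding S_def length_Cons sum.lessThan_Suc_shift by simp
  have x: "x \<in> {-1, 0, 1}" "x \<noteq> 0 \<Longrightarrow> first_nonzero xs \<in> {0, - x}" and "weak_alt1 xs"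
    using Cons.prems(1) by (auto simp: weak_alt1_Cons)
  then have IH: "sgn S = of_int (first_nonzero xs)" "xs \<noteq> [] \<Longrightarrow> \<bar>S\<bar> \<le> b 1"
    using Cons.IH[of "\<lambda>k. b (Suc k)"] Cons.prems(2,3) by (auto simp: S_def)
  have "\<bar>S\<bar> < b 0"
    using IH(2) Cons.prems(2,3) by (cases "xs = []") (auto simp: S_def intro: le_less_trans)
  from x(1) have "sgn (b 0 * of_int x + S) = of_int (first_nonzero (x # xs)) \<and> \<bar>b 0 * of_int x + S\<bar> \<le> b 0"
  proof (elim insertE emptyE)
    assume "x = 0"
    then show ?thesis using IH(1) \<open>\<bar>S\<bar> < b 0\<close> by simp
  next
    assume "x = 1"
    then have "S \<le> 0" using x(2) IH(1) by (auto simp: sgn_if split: if_splits)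
    then have "0 < b 0 + S" "b 0 + S \<le> b 0" using \<open>\<bar>S\<bar> < b 0\<close> by (simp_all add: abs_if split: if_splits)
    then show ?thesis using \<open>x = 1\<close> by simp
  next
    assume "x = -1"
    then have "0 \<le> S" using x(2) IH(1) by (auto simp: sgn_if split: if_splits)
    then have "- b 0 + S < 0" "- b 0 \<le> - b 0 + S" using \<open>\<bar>S\<bar> < b 0\<close> by (simp_all add: abs_if split: if_splits)
    then show ?thesis using \<open>x = -1\<close> by (simp add: abs_if)
  qed
  then show ?case
    by (simp only: sum_Cons list.distinct simp_thms)
qed

lemma abs_of_int_add_le_1_iff_pos:
  fixes S :: "'a :: linordered_idom"
  assumes "0 < S" "S < 1"
  shows "\<bar>of_int x + S\<bar> \<le> 1 \<longleftrightarrow> x \<in> {-1, 0}"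
proof -
  have "of_int x + S \<le> 1 \<longleftrightarrow> x \<le> 0"
  proof
    assume "of_int x + S \<le> 1"
    then have "of_int x < (1::'a)" using assms by linarith
    then show "x \<le> 0" by simp
  next
    assume "x \<le> 0"
    then have "of_int x \<le> (0::'a)" by simp
    then show "of_int x + S \<le> 1" using assms by linarith
  qed
  moreover have "-1 \<le> of_int x + S \<longleftrightarrow> -1 \<le> x"
  proof
    assume "-1 \<le> of_int x + S"
    then have "of_int (-2) < (of_int x :: 'a)" using assms by simp
    then show "-1 \<le> x" by (simp only: of_int_less_iff)
  next
    assume "-1 \<le> x"
    then have "of_int (-1) \<le> (of_int x :: 'a)" by (simp only: of_int_le_iff)
    then show "-1 \<le> of_int x + S" using assms by simp
  qed
  ultimately show ?thesis
    by (auto simp: abs_le_iff)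
qed

lemma abs_of_int_add_le_1_iff:
  fixes S :: "'a :: linordered_idom"
  assumes "\<bar>S\<bar> < 1" and "sgn S = of_int h"
  shows "\<bar>of_int x + S\<bar> \<le> 1 \<longleftrightarrow> x \<in> {-1, 0, 1} \<and> (x \<noteq> 0 \<longrightarrow> h \<in> {0, - x})"
proof (cases S "0::'a" rule: linorder_cases)
  case less
  then have "h = -1"
    using assms(2) by (metis of_int_eq_iff of_int_minus of_int_1 sgn_neg)
  have "\<bar>of_int x + S\<bar> = \<bar>of_int (- x) + (- S)\<bar>"
    by (simp add: abs_minus_commute)
  also have "\<dots> \<le> 1 \<longleftrightarrow> - x \<in> {-1, 0}"
    using less assms(1) by (intro abs_of_int_add_le_1_iff_pos) auto
  finally show ?thesis
    using \<open>h = -1\<close> by auto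
next
  case equal
  then have "h = 0"
    using assms(2) by simp
  have "\<bar>of_int x + S\<bar> \<le> 1 \<longleftrightarrow> \<bar>x\<bar> \<le> 1"
    using equal by (simp flip: of_int_abs)
  then show ?thesis
    using \<open>h = 0\<close> by auto
next
  case greater
  then have "h = 1"
    using assms(2) by simp
  have "\<bar>of_int x + S\<bar> \<le> 1 \<longleftrightarrow> x \<in> {-1, 0}"
    using greater assms(1) by (intro abs_of_int_add_le_1_iff_pos) auto
  then show ?thesis
    using \<open>h = 1\<close> by auto
qed

lemma weak_alt1_Cons_iff_weighted_sum:
  fixes b :: "nat \<Rightarrow> 'a :: linordered_idom"
  assumes decreasing: "\<And>j k. j < k \<Longrightarrow> k < length xs \<Longrightarrow> b k < b j"
    and pos: "\<And>j. j < length xs \<Longrightarrow> 0 < b j"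
    and less_1: "\<And>j. j < length xs \<Longrightarrow> b j < 1"
  shows "weak_alt1 (x # xs) \<longleftrightarrow> weak_alt1 xs \<and> \<bar>of_int x + (\<Sum>k<length xs. b k * of_int (xs ! k))\<bar> \<le> 1"
proof (cases "weak_alt1 xs")
  case False
  then show ?thesis by (simp add: weak_alt1_Cons)
next
  case True
  define S where "S = (\<Sum>k<length xs. b k * of_int (xs ! k))"
  have sgn: "sgn S = of_int (first_nonzero xs)" and bound: "xs \<noteq> [] \<Longrightarrow> \<bar>S\<bar> \<le> b 0"
    using weighted_sum_weak_alt1[of xs b] True decreasing pos by (simp_all add: S_def)
  have "\<bar>S\<bar> < 1"
    using bound less_1[of 0] by (cases "xs = []") (auto simp: S_def)
  then show ?thesis
    using True by (simp add: weak_alt1_Cons abs_of_int_add_le_1_iff[OF _ sgn] flip: S_def)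
qed

lemma matvec_sup_norm_le_iff:
  assumes "0 \<le> r"
  shows "matvec_sup_norm d A c \<le> r \<longleftrightarrow> (\<forall>i\<in>{1..d}. \<bar>\<Sum>j=1..d. A i j * of_int (c j)\<bar> \<le> r)"
  using assms by (auto simp: matvec_sup_norm_def)

lemma reclusive_row_sum:
  assumes "reclusive d A" and i: "i \<in> {1..d}"
  shows "(\<Sum>j=1..d. A i j * of_int (c j))
    = of_int (c i) + (\<Sum>k<d - i. A i (Suc i + k) * of_int (map c [Suc i..<d + 1] ! k))"
proof -
  have "(\<Sum>j=1..d. A i j * of_int (c j)) = (\<Sum>j=i..d. A i j * of_int (c j))"
    using assms by (intro sum.mono_neutral_right) (auto simp: reclusive_def)
  also have "\<dots> = A i i * of_int (c i) + (\<Sum>j=Suc i..<d + 1. A i j * of_int (c j))"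
    using i by (simp add: sum.atLeast_Suc_atMost atLeastLessThanSuc_atLeastAtMost)
  also have "\<dots> = of_int (c i) + (\<Sum>k<d - i. A i (Suc i + k) * of_int (c (Suc i + k)))"
    using assms by (simp add: sum.atLeastLessThan_shift_0 atLeast0LessThan reclusive_def)
  also have "\<dots> = of_int (c i) + (\<Sum>k<d - i. A i (Suc i + k) * of_int (map c [Suc i..<d + 1] ! k))"
    by (auto intro!: sum.cong simp del: upt_Suc)
  finally show ?thesis .
qed

lemma reclusive_row_weights:
  assumes "reclusive d A" and i: "i \<in> {1..d}"
  shows "\<And>j k. j < k \<Longrightarrow> k < d - i \<Longrightarrow> A i (Suc i + k) < A i (Suc i + j)"
    and "\<And>j. j < d - i \<Longrightarrow> 0 < A i (Suc i + j)"
    and "\<And>j. j < d - i \<Longrightarrow> A i (Suc i + j) < 1"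
proof -
  have diag: "A i i = 1"
    and row: "\<And>j k. j \<in> {1..d} \<Longrightarrow> k \<in> {1..d} \<Longrightarrow> i \<le> j \<Longrightarrow> j < k \<Longrightarrow> A i k < A i j \<and> 0 < A i k"
    using assms unfolding reclusive_def by blast+
  show "\<And>j k. j < k \<Longrightarrow> k < d - i \<Longrightarrow> A i (Suc i + k) < A i (Suc i + j)"
    using row i by simp
  show "\<And>j. j < d - i \<Longrightarrow> 0 < A i (Suc i + j)"
    using row[of i] i by simp
  show "\<And>j. j < d - i \<Longrightarrow> A i (Suc i + j) < 1"
    using row[of i] i diag by fastforce
qed

lemma weak_alt1_suffix_iff:
  assumes "reclusive d A" and "1 \<le> i" "i \<le> d + 1"
  shows "weak_alt1 (map c [i..<d + 1]) \<longleftrightarrow> (\<forall>l\<in>{i..d}. \<bar>\<Sum>j=1..d. A l j * of_int (c j)\<bar> \<le> 1)"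
  using \<open>i \<le> d + 1\<close> \<open>1 \<le> i\<close>
proof (induction i rule: inc_induct)
  case base
  then show ?case by simp
next
  case (step n)
  have n: "n \<in> {1..d}"
    using step by auto
  define tail where "tail = map c [Suc n..<d + 1]"
  have "length tail = d - n"
    by (simp add: tail_def del: upt_Suc)
  then have "weak_alt1 (c n # tail) \<longleftrightarrow>
      weak_alt1 tail \<and> \<bar>of_int (c n) + (\<Sum>k<d - n. A n (Suc n + k) * of_int (tail ! k))\<bar> \<le> 1"
    using weak_alt1_Cons_iff_weighted_sum[of tail "\<lambda>k. A n (Suc n + k)" "c n"]
      reclusive_row_weights[OF assms(1) n]
    by simp
  also have "\<dots> \<longleftrightarrow> weak_alt1 tail \<and> \<bar>\<Sum>j=1..d. A n j * of_int (c j)\<bar> \<le> 1"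
    unfolding reclusive_row_sum[OF assms(1) n] tail_def ..
  moreover have "map c [n..<d + 1] = c n # tail"
    using n by (simp add: tail_def upt_conv_Cons del: upt_Suc)
  moreover have "{n..d} = insert n {Suc n..d}"
    using n by auto
  ultimately show ?case
    using step.IH by (auto simp: tail_def simp del: upt_Suc)
qed

theorem mainTheorem18:
  fixes d :: nat and A :: "nat \<Rightarrow> nat \<Rightarrow> real" and c :: "nat \<Rightarrow> int"
  assumes "reclusive d A"
  shows "matvec_sup_norm d A c \<le> 1 \<longleftrightarrow> weak_alt1 (map c [1..<d+1])"
  using weak_alt1_suffix_iff[OF assms, of 1] by (simp add: matvec_sup_norm_le_iff)

end
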